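(* Let $\mathcal A$ be a weighted ODCA over $\mathbb F$, $K=|Q|\cdot|C|$, $c$ a configuration, $V\subseteq\mathbb F^{|Q|}$ a subspace, $S\subseteq C$ and $X\subseteq\mathbb N$. If $z$ is a minimal witness for $(c,\overline V,S,X)$ and exactly $t$ distinct counter values occur in the run of $z$ from $c$, then $|z|\le t\cdot K$.
   Context: Fix a field $\mathbb{F}$ and a finite alphabet $\Sigma$. For $n\in\mathbb N$ let $\mathrm{sgn}(n)=0$ if $n=0$ and $1$ if $n>0$. A weighted ODCA is $\mathcal{A}=((C,\delta_0,\delta_1,p_0),(Q,\lambda,\Delta,\eta))$ where $C$ is a finite nonempty set of counter states, $\delta_0:C\times\Sigma\to C\times\{0,+1\}$ and $\delta_1:C\times\Sigma\to C\times\{-1,0,+1\}$ are deterministic counter transition functions, $p_0\in C$, $Q$ is a finite nonempty set of states, $\lambda,\eta\in\mathbb{F}^{|Q|}$, and $\Delta:\Sigma\times\{0,1\}\to\mathbb{F}^{|Q|\times|Q|}$. A configuration is a triple $(x,p,n)\in\mathbb{F}^{|Q|}\times C\times\mathbb{N}$ (weight vector, counter state, counter value). Reading $a\in\Sigma$ from $(x,p,n)$ with $d=\mathrm{sgn}(n)$ and $\delta_d(p,a)=(p',e)$ leads to $(x\Delta(a,d),p',n+e)$; for each word $w$ and configuration $c$ there is a unique run of $w$ from $c$. For a subspace $V\subseteq\mathbb F^{|Q|}$ let $\overline V=\mathbb F^{|Q|}\setminus V$. For $S\subseteq C$ and $X\subseteq\mathbb N$, a word $z$ is a witness for $(c,\overline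 V,S,X)$ if the run of $z$ from $c$ ends in a configuration $(x,p,n)$ with $x\in\overline V$, $p\in S$, $n\in X$; it is a minimal witness if no strictly shorter word is a witness. *)

theory Defs
  imports "HOL-Analysis.Analysis"
begin

text \<open>Counter states: finite type 'c; alphabet: finite type 'a;
  states Q: finite type 'q; weight vectors are 'f^'q (row vectors), transition
  matrices 'f^'q^'q.\<close>

record ('c, 'a, 'q, 'f) wodca =
  delta0 :: "'c \<Rightarrow> 'a \<Rightarrow> 'c \<times> int"
  delta1 :: "'c \<Rightarrow> 'a \<Rightarrow> 'c \<times> int"
  p0 :: 'c
  lam :: "'f ^ 'q"
  Delta :: "'a \<Rightarrow> nat \<Rightarrow> 'f ^ 'q ^ 'q"
  eta :: "'f ^ 'q"

definition wf_wodca :: "('c, 'a, 'q::finite, 'f) wodca \<Rightarrow> bool" where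
  "wf_wodca A \<longleftrightarrow>
     (\<forall>p a. snd (delta0 A p a) \<in> {0, 1}) \<and>
     (\<forall>p a. snd (delta1 A p a) \<in> {-1, 0, 1})"

definition sgn_nat :: "nat \<Rightarrow> nat" where
  "sgn_nat n = (if n = 0 then 0 else 1)"

type_synonym ('f, 'q, 'c) config = "('f ^ 'q) \<times> 'c \<times> nat"

definition step :: "('c, 'a, 'q, 'f::field) wodca \<Rightarrow> ('f, 'q::finite, 'c) config \<Rightarrow> 'a
                     \<Rightarrow> ('f, 'q, 'c) config" where
  "step A cfg a = (case cfg of (x, p, n) \<Rightarrow>
     (let d = sgn_nat n;
          pe = (if d = 0 then delta0 A p a else delta1 A p a)
      in (x v* Delta A a d, fst pe, nat (int n + snd pe))))"

fun run :: "('c, 'a, 'q, 'f::field) wodca \<Rightarrow> ('f, 'q::finite, 'c) config \<Rightarrow> 'a list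
             \<Rightarrow> ('f, 'q, 'c) config list" where
  "run A c [] = [c]"
| "run A c (a # w) = c # run A (step A c a) w"

definition final_config :: "('c, 'a, 'q, 'f::field) wodca \<Rightarrow> ('f, 'q::finite, 'c) config
                             \<Rightarrow> 'a list \<Rightarrow> ('f, 'q, 'c) config" where
  "final_config A c w = last (run A c w)"

definition witness :: "('c, 'a, 'q, 'f::field) wodca \<Rightarrow> ('f, 'q::finite, 'c) config
    \<Rightarrow> ('f ^ 'q) set \<Rightarrow> 'c set \<Rightarrow> nat set \<Rightarrow> 'a list \<Rightarrow> bool" where
  "witness A c V S X z = (case final_config A c z of (x, p, n) \<Rightarrow>
      x \<in> UNIV - V \<and> p \<in> S \<and> n \<in> X)"

definition minimal_witness :: "('c, 'a, 'q, 'f::field) wodca \<Rightarrow> ('f, 'q::finite, 'c) config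
    \<Rightarrow> ('f ^ 'q) set \<Rightarrow> 'c set \<Rightarrow> nat set \<Rightarrow> 'a list \<Rightarrow> bool" where
  "minimal_witness A c V S X z \<longleftrightarrow> witness A c V S X z \<and>
      (\<forall>z'. length z' < length z \<longrightarrow> \<not> witness A c V S X z')"

definition counter_values :: "('c, 'a, 'q, 'f::field) wodca \<Rightarrow> ('f, 'q::finite, 'c) config
    \<Rightarrow> 'a list \<Rightarrow> nat set" where
  "counter_values A c z = (\<lambda>(x, p, n). n) ` set (run A c z)"

end

theory Submission
  imports Defs
begin

text \<open>Fix a control state (p, n) occurring at several positions of the run of a minimal
  witness z. The suffix of z after any of these positions maps the weight vector by one
  and the same matrix M, and leads to the same counter state and value, whatever the
  weight. Cutting z from an earlier such position j to a later one k gives a shorter word,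
  which by minimality is not a witness, so the weight at j is sent into V by M. If the
  weight at k were in the span of the earlier ones, M would send it into V as well, and z
  would not be a witness. Hence the weights at the positions with a fixed control state
  are linearly independent, so there are at most |Q| such positions, and at most |C| t
  control states occur along the run.\<close>

lemma (in vector_space) independent_if_not_in_span_of_earlier:
  fixes J :: "nat set"
  assumes "finite J" and "\<And>k. k \<in> J \<Longrightarrow> f k \<notin> span (f ` {j \<in> J. j < k})"
  shows "independent (f ` J) \<and> inj_on f J"
  using assms
proof (induction J rule: finite_linorder_max_induct)
  case empty
  then show ?case by (simp add: independent_empty)
next
  case (insert k J)
  have earlier: "{j \<in> insert k J. j < k} = J"
    using insert.hyps by auto
  have "f i \<notin> span (f ` {j \<in> J. j < i})" if "i \<in> J" for i
  proof -
    have "{j \<in> insert k J. j < i} = {j \<in> J. j < i}"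
      using that insert.hyps by auto
    then show ?thesis
      using insert.prems[of i] that by simp
  qed
  then have IH: "independent (f ` J) \<and> inj_on f J"
    by (rule insert.IH)
  have new: "f k \<notin> span (f ` J)"
    using insert.prems[of k] earlier by simp
  then have "f k \<notin> f ` J"
    using span_base by blast
  moreover have "J - {k} = J"
    using insert.hyps by auto
  ultimately show ?case
    using IH new by (simp add: independent_insertI)
qed

lemma vec_card_le_if_not_in_span_of_earlier:
  fixes f :: "nat \<Rightarrow> 'f::field ^ 'n"
  assumes "finite J" and "\<And>k. k \<in> J \<Longrightarrow> f k \<notin> vec.span (f ` {j \<in> J. j < k})"
  shows "card J \<le> CARD('n)"
proof -
  have independent: "vec.independent (f ` J)" and "inj_on f J"
    using vec.independent_if_not_in_span_of_earlier[OF assms] by auto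
  then have "card J = card (f ` J)"
    by (simp add: card_image)
  also have "\<dots> \<le> vec.dim (UNIV :: ('f ^ 'n) set)"
    using independent by (intro vec.independent_card_le_dim) auto
  finally show ?thesis
    by (simp only: vec_dim_card)
qed

lemma vector_matrix_mult_span_in_subspace:
  fixes M :: "'f::field ^ 'n ^ 'm"
  assumes "vec.subspace V" and "\<And>y. y \<in> T \<Longrightarrow> y v* M \<in> V" and "x \<in> vec.span T"
  shows "x v* M \<in> V"
proof -
  have "(\<lambda>y. y v* M) = (*v) (transpose M)"
    by (simp add: fun_eq_iff)
  then have "vec.subspace ((\<lambda>y. y v* M) -` V)"
    using vec.subspace_vimage[OF assms(1)] by simp
  then have "vec.span T \<subseteq> (\<lambda>y. y v* M) -` V"
    using assms(2) by (intro vec.span_minimal) auto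
  with assms(3) show ?thesis
    by auto
qed

lemma card_le_card_image_mult_fibres:
  assumes "finite A" and "\<And>y. y \<in> g ` A \<Longrightarrow> card {x \<in> A. g x = y} \<le> b"
  shows "card A \<le> card (g ` A) * b"
proof -
  have "card A = card (\<Union>y\<in>g ` A. {x \<in> A. g x = y})"
    by (rule arg_cong[where f = card]) blast
  also have "\<dots> \<le> (\<Sum>y\<in>g ` A. card {x \<in> A. g x = y})"
    using assms(1) by (intro card_UN_le) simp
  also have "\<dots> \<le> card (g ` A) * b"
    using sum_bounded_above[of "g ` A", OF assms(2)] by simp
  finally show ?thesis .
qed

fun run_matrix :: "('c, 'a, 'q, 'f::field) wodca \<Rightarrow> 'c \<Rightarrow> nat \<Rightarrow> 'a list \<Rightarrow> 'f ^ 'q ^ 'q" where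
  "run_matrix A p n [] = mat 1"
| "run_matrix A p n (a # w) =
     (let d = sgn_nat n; pe = (if d = 0 then delta0 A p a else delta1 A p a)
      in Delta A a d ** run_matrix A (fst pe) (nat (int n + snd pe)) w)"

lemma run_nonempty [simp]: "run A c w \<noteq> []"
  by (cases w) auto

lemma length_run [simp]: "length (run A c w) = Suc (length w)"
  by (induction w arbitrary: c) auto

lemma final_config_Nil [simp]: "final_config A c [] = c"
  by (simp add: final_config_def)

lemma final_config_Cons [simp]: "final_config A c (a # w) = final_config A (step A c a) w"
  by (simp add: final_config_def)

lemma final_config_append: "final_config A c (u @ w) = final_config A (final_config A c u) w"
  by (induction u arbitrary: c) auto

lemma nth_run: "i \<le> length w \<Longrightarrow> run A c w ! i = final_config A c (take i w)"
  by (induction w arbitrary: c i) (auto simp: nth_Cons split: nat.split)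

lemma fst_final_config:
  "fst (final_config A (x, p, n) w) = x v* run_matrix A p n w"
  by (induction w arbitrary: x p n) (simp_all add: step_def Let_def vector_matrix_mul_assoc)

lemma snd_final_config_weight_independent:
  "snd (final_config A (x, p, n) w) = snd (final_config A (y, p, n) w)"
  by (induction w arbitrary: x y p n) (simp_all add: step_def Let_def)

lemma final_config_take_append:
  assumes "j \<le> length z" and "run A c z ! j = (y, p, n)"
  shows "final_config A c (take j z @ w) =
           (y v* run_matrix A p n w, snd (final_config A (0, p, n) w))"
proof -
  have "final_config A c (take j z @ w) = final_config A (y, p, n) w"
    using assms by (simp add: final_config_append nth_run)
  also have "\<dots> = (fst (final_config A (y, p, n) w), snd (final_config A (y, p, n) w))"
    by simp
  finally show ?thesis
    by (simp only: fst_final_config snd_final_config_weight_independent[of A y p n w 0])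
qed

lemma minimal_witness_weight_not_in_span:
  assumes "vec.subspace V" and "minimal_witness A c V S X z" and "k \<le> length z"
  shows "fst (run A c z ! k) \<notin> vec.span ((\<lambda>j. fst (run A c z ! j)) `
           {j. j < k \<and> snd (run A c z ! j) = snd (run A c z ! k)})"
proof
  obtain x p n where k_config: "run A c z ! k = (x, p, n)"
    by (metis prod.collapse)
  define w where "w = drop k z"
  define M where "M = run_matrix A p n w"
  define r where "r = snd (final_config A (0, p, n) w)"
  have "final_config A c z = (x v* M, r)"
    using final_config_take_append[OF assms(3) k_config, of w] by (simp add: w_def M_def r_def)
  then have x_out: "x v* M \<notin> V" and r: "fst r \<in> S" "snd r \<in> X"
    using assms(2) by (auto simp: minimal_witness_def witness_def split: prod.splits)
  define T where "T = (\<lambda>j. fst (run A c z ! j)) ` {j. j < k \<and> snd (run A c z ! j) = (p, n)}"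
  have T_out: "y v* M \<in> V" if "y \<in> T" for y
  proof -
    obtain j where "j < k" and "snd (run A c z ! j) = (p, n)" and "y = fst (run A c z ! j)"
      using \<open>y \<in> T\<close> by (auto simp: T_def)
    then have j_config: "run A c z ! j = (y, p, n)"
      by (simp add: prod_eq_iff)
    have "final_config A c (take j z @ w) = (y v* M, r)"
      using final_config_take_append[OF _ j_config] \<open>j < k\<close> assms(3)
      by (simp add: M_def r_def)
    moreover have "\<not> witness A c V S X (take j z @ w)"
      using assms(2) \<open>j < k\<close> assms(3) by (simp add: minimal_witness_def w_def)
    ultimately show ?thesis
      using r by (auto simp: witness_def split: prod.splits)
  qed
  assume "fst (run A c z ! k) \<in> vec.span ((\<lambda>j. fst (run A c z ! j)) `
                     {j. j < k \<and> snd (run A c z ! j) = snd (run A c z ! k)})"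
  then have "x \<in> vec.span T"
    by (simp add: T_def k_config)
  with x_out T_out show False
    using vector_matrix_mult_span_in_subspace[OF assms(1)] by blast
qed

lemma minimal_witness_card_visits_le:
  fixes A :: "('c, 'a, 'q::finite, 'f::field) wodca"
  assumes "vec.subspace V" and "minimal_witness A c V S X z"
  shows "card {j \<in> {..length z}. snd (run A c z ! j) = pq} \<le> CARD('q)"
proof (rule vec_card_le_if_not_in_span_of_earlier[where f = "\<lambda>j. fst (run A c z ! j)"])
  fix k
  assume "k \<in> {j \<in> {..length z}. snd (run A c z ! j) = pq}"
  then have "k \<le> length z" and "snd (run A c z ! k) = pq"
    by auto
  moreover have "{j \<in> {j \<in> {..length z}. snd (run A c z ! j) = pq}. j < k} =
                 {j. j < k \<and> snd (run A c z ! j) = pq}"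
    using \<open>k \<le> length z\<close> by auto
  ultimately show "fst (run A c z ! k) \<notin> vec.span ((\<lambda>j. fst (run A c z ! j)) `
                     {j \<in> {j \<in> {..length z}. snd (run A c z ! j) = pq}. j < k})"
    using minimal_witness_weight_not_in_span[OF assms, of k] by simp
qed simp

lemma control_states_of_run_subset:
  "(\<lambda>j. snd (run A c z ! j)) ` {..length z} \<subseteq> UNIV \<times> counter_values A c z"
proof
  fix pq
  assume "pq \<in> (\<lambda>j. snd (run A c z ! j)) ` {..length z}"
  then obtain j where "j \<le> length z" and pq: "pq = snd (run A c z ! j)"
    by auto
  moreover obtain x p n where j_config: "run A c z ! j = (x, p, n)"
    using prod_cases3 by blast
  ultimately have "(x, p, n) \<in> set (run A c z)"
    by (metis length_run le_imp_less_Suc nth_mem)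
  then show "pq \<in> UNIV \<times> counter_values A c z"
    unfolding pq counter_values_def j_config by force
qed

theorem mainTheorem9:
  fixes A :: "('c::finite, 'a::finite, 'q::finite, 'f::field) wodca"
    and c :: "('f, 'q, 'c) config"
    and V :: "('f ^ 'q) set" and S :: "'c set" and X :: "nat set"
    and z :: "'a list" and t :: nat
  assumes "wf_wodca A"
    and "vec.subspace V"
    and "minimal_witness A c V S X z"
    and "card (counter_values A c z) = t"
  shows "length z \<le> t * (CARD('q) * CARD('c))"
proof -
  define control where "control j = snd (run A c z ! j)" for j
  have visits: "Suc (length z) \<le> card (control ` {..length z}) * CARD('q)"
    using card_le_card_image_mult_fibres[of "{..length z}" control]
      minimal_witness_card_visits_le[OF assms(2,3)]
    by (simp add: control_def)
  have "card (control ` {..length z}) \<le> card (UNIV \<times> counter_values A c z :: ('c \<times> nat) set)"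
    using control_states_of_run_subset[of A c z]
    by (intro card_mono) (simp_all add: control_def counter_values_def)
  also have "\<dots> = CARD('c) * t"
    using assms(4) by (simp add: card_cartesian_product)
  finally have "card (control ` {..length z}) * CARD('q) \<le> CARD('c) * t * CARD('q)"
    by (rule mult_le_mono1)
  with visits have "Suc (length z) \<le> CARD('c) * t * CARD('q)"
    by (rule le_trans)
  then show ?thesis
    by (simp add: mult_ac)
qed

end
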